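(* Let $n$ be an odd positive integer, and suppose that $n-1$ queens are placed on $\mathbb{Z}_n^2$ without conflict. Then one more queen can be placed on $\mathbb{Z}_n^2$ so that the resulting $n$ queens are without conflict.
   Context: Queens are placed on distinct fields of the torus board $\mathbb{Z}_n^2$. Two queens at distinct fields $(x,y),(x',y')$ are in conflict iff $x=x'$, or $y=y'$, or $x+y=x'+y'$, or $x-y=x'-y'$ in $\mathbb{Z}_n$. A placement is without conflict if no two queens are in conflict. *)

theory Defs
  imports Main
begin

text \<open>Fields of the torus board Z_n^2 are represented by pairs (x,y) of integers
with 0 <= x,y < n; arithmetic conditions are read modulo n.\<close>

definition board :: "nat \<Rightarrow> (int \<times> int) set" where
  "board n = {0..<int n} \<times> {0..<int n}"

definition in_conflict :: "nat \<Rightarrow> int \<times> int \<Rightarrow> int \<times> int \<Rightarrow> bool" where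
  "in_conflict n p q \<longleftrightarrow>
     (fst p mod int n = fst q mod int n) \<or>
     (snd p mod int n = snd q mod int n) \<or>
     ((fst p + snd p) mod int n = (fst q + snd q) mod int n) \<or>
     ((fst p - snd p) mod int n = (fst q - snd q) mod int n)"

definition without_conflict :: "nat \<Rightarrow> (int \<times> int) set \<Rightarrow> bool" where
  "without_conflict n Q \<longleftrightarrow>
     (\<forall>p\<in>Q. \<forall>q\<in>Q. p \<noteq> q \<longrightarrow> \<not> in_conflict n p q)"

end

theory Submission
  imports Defs "HOL-Number_Theory.Cong"
begin

(* The n - 1 queens lie on n - 1 distinct rows, columns, diagonals and antidiagonals, so in
   each of these four families exactly one residue is missed: x, y, s and d, say.  Because n
   is odd, 0 + 1 + ... + (n - 1) = n (n - 1) / 2 is divisible by n, so summing the first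
   coordinates of the queens gives -x modulo n, and likewise -y, -s, -d for the other
   families.  Since x + y and x - y are the diagonal coordinates of a field (x, y), this
   forces s = x + y and d = x - y modulo n: the field (x, y) lies on a free row, column,
   diagonal and antidiagonal. *)

lemma int_dvd_sum_atLeastLessThan_odd:
  assumes "odd n"
  shows "int n dvd \<Sum>{0..<int n}"
proof -
  obtain k where n: "n = Suc (2 * k)"
    using assms by (metis oddE Suc_eq_plus1)
  have "{0..<int n} = int ` {0..2 * k}"
    by (simp add: n image_int_atLeastLessThan atLeastLessThanSuc_atLeastAtMost [symmetric]
        del: of_nat_Suc)
  then have "\<Sum>{0..<int n} = (\<Sum>i = 0..2 * k. int i)"
    by (simp add: sum.reindex)
  also have "\<dots> = int k * int n"
    using double_gauss_sum [of "2 * k", where 'a = int] by (simp add: n)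
  finally show ?thesis
    by simp
qed

lemma missing_residue:
  fixes g :: "'a \<Rightarrow> int"
  assumes "odd n" and "finite Q" and "card Q = n - 1"
    and inj: "inj_on (\<lambda>q. g q mod int n) Q"
  obtains r where "r \<in> {0..<int n}" and "\<forall>q\<in>Q. g q mod int n \<noteq> r"
    and "[(\<Sum>q\<in>Q. g q) = - r] (mod int n)"
proof -
  let ?R = "(\<lambda>q. g q mod int n) ` Q"
  have n: "int n > 0"
    using assms(1) by (simp add: odd_pos)
  have R_sub: "?R \<subseteq> {0..<int n}"
    using n by auto
  have card_R: "card ?R = n - 1"
    using inj assms(3) by (simp add: card_image)
  then have "\<not> {0..<int n} \<subseteq> ?R"
    using n card_mono [OF finite_imageI [OF assms(2)]] by fastforce
  then obtain r where r: "r \<in> {0..<int n}" "r \<notin> ?R"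
    by blast
  have R: "?R = {0..<int n} - {r}"
    using R_sub r card_R by (intro card_subset_eq) auto
  have "[(\<Sum>q\<in>Q. g q) = (\<Sum>q\<in>Q. g q mod int n)] (mod int n)"
    by (intro cong_sum) (simp add: cong_def)
  also have "(\<Sum>q\<in>Q. g q mod int n) = \<Sum>({0..<int n} - {r})"
    using sum.reindex [OF inj, of id] R by simp
  also have "\<dots> = \<Sum>{0..<int n} - r"
    using r(1) by (simp add: sum_diff1)
  also have "[\<dots> = 0 - r] (mod int n)"
    using int_dvd_sum_atLeastLessThan_odd [OF assms(1)]
    by (intro cong_diff) (simp_all add: cong_0_iff)
  finally show thesis
    using that r by auto
qed

lemma missing_residue_add:
  fixes f g :: "'a \<Rightarrow> int"
  assumes "[(\<Sum>q\<in>Q. f q) = - x] (mod m)" and "[(\<Sum>q\<in>Q. g q) = - y] (mod m)"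
    and "[(\<Sum>q\<in>Q. f q + g q) = - s] (mod m)" and "s \<in> {0..<m}"
  shows "s = (x + y) mod m"
proof -
  have "[- s = (\<Sum>q\<in>Q. f q + g q)] (mod m)"
    using assms(3) by (rule cong_sym)
  also have "(\<Sum>q\<in>Q. f q + g q) = (\<Sum>q\<in>Q. f q) + (\<Sum>q\<in>Q. g q)"
    by (rule sum.distrib)
  also have "[\<dots> = - x + - y] (mod m)"
    using assms(1,2) by (rule cong_add)
  finally have "[s = x + y] (mod m)"
    by (simp add: cong_minus_minus_iff [of s "x + y", symmetric])
  then show ?thesis
    using assms(4) by (simp add: cong_def)
qed

lemma missing_residue_diff:
  fixes f g :: "'a \<Rightarrow> int"
  assumes "[(\<Sum>q\<in>Q. f q) = - x] (mod m)" and "[(\<Sum>q\<in>Q. g q) = - y] (mod m)"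
    and "[(\<Sum>q\<in>Q. f q - g q) = - d] (mod m)" and "d \<in> {0..<m}"
  shows "d = (x - y) mod m"
proof -
  have "[- d = (\<Sum>q\<in>Q. f q - g q)] (mod m)"
    using assms(3) by (rule cong_sym)
  also have "(\<Sum>q\<in>Q. f q - g q) = (\<Sum>q\<in>Q. f q) - (\<Sum>q\<in>Q. g q)"
    by (rule sum_subtractf)
  also have "[\<dots> = - x - - y] (mod m)"
    using assms(1,2) by (rule cong_diff)
  finally have "[d = x - y] (mod m)"
    by (simp add: cong_minus_minus_iff [of d "x - y", symmetric])
  then show ?thesis
    using assms(4) by (simp add: cong_def)
qed

definition conflict_lines :: "nat \<Rightarrow> (int \<times> int \<Rightarrow> int) set" where
  "conflict_lines n =
     {\<lambda>p. fst p mod int n, \<lambda>p. snd p mod int n,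
      \<lambda>p. (fst p + snd p) mod int n, \<lambda>p. (fst p - snd p) mod int n}"

lemma ball_conflict_lines:
  "(\<forall>l\<in>conflict_lines n. P l) \<longleftrightarrow>
     P (\<lambda>p. fst p mod int n) \<and> P (\<lambda>p. snd p mod int n) \<and>
     P (\<lambda>p. (fst p + snd p) mod int n) \<and> P (\<lambda>p. (fst p - snd p) mod int n)"
  by (simp add: conflict_lines_def)

lemma in_conflict_iff_conflict_lines:
  "in_conflict n p q \<longleftrightarrow> (\<exists>l\<in>conflict_lines n. l p = l q)"
  by (auto simp: in_conflict_def conflict_lines_def)

lemma without_conflict_iff_inj_on:
  "without_conflict n Q \<longleftrightarrow> (\<forall>l\<in>conflict_lines n. inj_on l Q)"
  unfolding without_conflict_def in_conflict_iff_conflict_lines inj_on_def by blast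

lemma without_conflict_insert:
  assumes "without_conflict n Q" and "\<forall>l\<in>conflict_lines n. l q \<notin> l ` Q"
  shows "without_conflict n (insert q Q)"
  using assms unfolding without_conflict_iff_inj_on by auto

lemma missing_line_residues:
  assumes "odd n" and "finite Q" and "card Q = n - 1" and "without_conflict n Q"
  obtains x y s d where
    "x \<in> {0..<int n}" "\<forall>q\<in>Q. fst q mod int n \<noteq> x"
    "y \<in> {0..<int n}" "\<forall>q\<in>Q. snd q mod int n \<noteq> y"
    "s \<in> {0..<int n}" "\<forall>q\<in>Q. (fst q + snd q) mod int n \<noteq> s"
    "d \<in> {0..<int n}" "\<forall>q\<in>Q. (fst q - snd q) mod int n \<noteq> d"
    "[(\<Sum>q\<in>Q. fst q) = - x] (mod int n)" "[(\<Sum>q\<in>Q. snd q) = - y] (mod int n)"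
    "[(\<Sum>q\<in>Q. fst q + snd q) = - s] (mod int n)"
    "[(\<Sum>q\<in>Q. fst q - snd q) = - d] (mod int n)"
proof -
  have "inj_on (\<lambda>p. fst p mod int n) Q \<and> inj_on (\<lambda>p. snd p mod int n) Q \<and>
      inj_on (\<lambda>p. (fst p + snd p) mod int n) Q \<and> inj_on (\<lambda>p. (fst p - snd p) mod int n) Q"
    using assms(4) unfolding without_conflict_iff_inj_on ball_conflict_lines .
  then have inj_x: "inj_on (\<lambda>p. fst p mod int n) Q"
    and inj_y: "inj_on (\<lambda>p. snd p mod int n) Q"
    and inj_s: "inj_on (\<lambda>p. (fst p + snd p) mod int n) Q"
    and inj_d: "inj_on (\<lambda>p. (fst p - snd p) mod int n) Q"
    by simp_all
  note missing = missing_residue [OF assms(1-3)]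
  obtain x where "x \<in> {0..<int n}" "\<forall>q\<in>Q. fst q mod int n \<noteq> x"
      "[(\<Sum>q\<in>Q. fst q) = - x] (mod int n)"
    by (rule missing [OF inj_x])
  moreover obtain y where "y \<in> {0..<int n}" "\<forall>q\<in>Q. snd q mod int n \<noteq> y"
      "[(\<Sum>q\<in>Q. snd q) = - y] (mod int n)"
    by (rule missing [OF inj_y])
  moreover obtain s where "s \<in> {0..<int n}" "\<forall>q\<in>Q. (fst q + snd q) mod int n \<noteq> s"
      "[(\<Sum>q\<in>Q. fst q + snd q) = - s] (mod int n)"
    by (rule missing [OF inj_s])
  moreover obtain d where "d \<in> {0..<int n}" "\<forall>q\<in>Q. (fst q - snd q) mod int n \<noteq> d"
      "[(\<Sum>q\<in>Q. fst q - snd q) = - d] (mod int n)"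
    by (rule missing [OF inj_d])
  ultimately show thesis
    using that by blast
qed

theorem mainTheorem5:
  fixes n :: nat and Q :: "(int \<times> int) set"
  assumes "odd n" and "n > 0"
    and "Q \<subseteq> board n" and "card Q = n - 1"
    and "without_conflict n Q"
  shows "\<exists>q \<in> board n. q \<notin> Q \<and> without_conflict n (insert q Q)"
proof -
  have "finite Q"
    using assms(3) finite_subset unfolding board_def by blast
  then obtain x y s d where x: "x \<in> {0..<int n}" "\<forall>q\<in>Q. fst q mod int n \<noteq> x"
      and y: "y \<in> {0..<int n}" "\<forall>q\<in>Q. snd q mod int n \<noteq> y"
      and s: "s \<in> {0..<int n}" "\<forall>q\<in>Q. (fst q + snd q) mod int n \<noteq> s"
      and d: "d \<in> {0..<int n}" "\<forall>q\<in>Q. (fst q - snd q) mod int n \<noteq> d"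
      and sums: "[(\<Sum>q\<in>Q. fst q) = - x] (mod int n)" "[(\<Sum>q\<in>Q. snd q) = - y] (mod int n)"
        "[(\<Sum>q\<in>Q. fst q + snd q) = - s] (mod int n)"
        "[(\<Sum>q\<in>Q. fst q - snd q) = - d] (mod int n)"
    by (rule missing_line_residues [OF assms(1) _ assms(4,5)])
  have "s = (x + y) mod int n"
    using missing_residue_add [OF sums(1,2,3) s(1)] .
  moreover have "d = (x - y) mod int n"
    using missing_residue_diff [OF sums(1,2,4) d(1)] .
  ultimately have "\<forall>l\<in>conflict_lines n. l (x, y) \<notin> l ` Q"
    using x y s(2) d(2) unfolding ball_conflict_lines by auto
  moreover have "(x, y) \<notin> Q"
    using x by force
  moreover have "(x, y) \<in> board n"
    using x(1) y(1) by (simp add: board_def)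
  ultimately show ?thesis
    using without_conflict_insert [OF assms(5)] by blast
qed

end
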